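(* Let $\mathcal{M}=(\mathcal{S},\mathcal{A},p,r,\gamma)$ be a finite MDP with discount $\gamma\in[0,1)$ whose action space is factored as $\mathcal{A}=\mathcal{A}_1\times\cdots\times\mathcal{A}_D$, and let $\pi:\mathcal{S}\to\Delta(\mathcal{A})$ be a policy. Suppose there exist state abstractions $\phi_d:\mathcal{S}\to\mathcal{Z}_d$ ($d=1,\dots,D$), writing $\boldsymbol{\phi}=(\phi_1,\dots,\phi_D)$, $z_d=\phi_d(s)$, $z'_d=\phi_d(s')$, together with functions $p_d:\mathcal{Z}_d\times\mathcal{A}_d\to\Delta(\mathcal{Z}_d)$, $r_d:\mathcal{Z}_d\times\mathcal{A}_d\to\mathbb{R}$ and $\pi_d:\mathcal{Z}_d\to\Delta(\mathcal{A}_d)$, such that for all $s,s'\in\mathcal{S}$ and all $\boldsymbol{a}=(a_1,\dots,a_D)\in\mathcal{A}$: (i) $\sum_{\tilde{s}\in\boldsymbol{\phi}^{-1}(\boldsymbol{\phi}(s'))} p(\tilde{s}\mid s,\boldsymbol{a})=\prod_{d=1}^D p_d(z'_d\mid z_d,a_d)$; (ii) $r(s,\boldsymbol{a})=\sum_{d=1}^D r_d(z_d,a_d)$; (iii) $\pi(\boldsymbol{a}\mid s)=\prod_{d=1}^D\pi_d(a_d\mid z_d)$. Then there exist functions $q_d:\mathcal{S}\times\mathcal{A}_d\to\mathbb{R}$ ($d=1,\dots,D$) such that $Q^\pi(s,\boldsymbol{a})=\sum_{d=1}^D q_d(s,a_d)$ for all $s\in\mathcal{S}$, $\boldsymbo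l{a}\in\mathcal{A}$.
   Context: An MDP $(\mathcal{S},\mathcal{A},p,r,\gamma)$ has transition kernel $p(s'\mid s,a)$, deterministic reward $r(s,a)$ and discount $\gamma$. For a policy $\pi$ (a map from states to distributions over actions), $Q^\pi(s,a)=\mathbb{E}\big[\sum_{t\ge1}\gamma^{t-1}r(s_t,a_t)\mid s_1=s,a_1=a\big]$ where $s_{t+1}\sim p(\cdot\mid s_t,a_t)$ and $a_{t}\sim\pi(\cdot\mid s_t)$ for $t\ge2$. A state abstraction is a map $\phi:\mathcal{S}\to\mathcal{Z}$; for $\boldsymbol{\phi}=(\phi_1,\dots,\phi_D)$ and $\boldsymbol{z}=(z_1,\dots,z_D)$, $\boldsymbol{\phi}^{-1}(\boldsymbol{z})=\{\tilde s\in\mathcal{S}:\phi_d(\tilde s)=z_d\ \forall d\}$. An action $\boldsymbol{a}\in\mathcal{A}_1\times\cdots\times\mathcal{A}_D$ is written as its vector of sub-actions $(a_1,\dots,a_D)$. *)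

theory Defs
  imports "HOL-Probability.Probability"
begin

definition factored_actions :: "nat \<Rightarrow> (nat \<Rightarrow> 'b set) \<Rightarrow> (nat \<Rightarrow> 'b) set" where
  "factored_actions D A = PiE {..<D} A"

text \<open>Distribution of the state-action pair (s_{n+1}, a_{n+1}) given s_1 = s, a_1 = a,
where s_{t+1} ~ p(. | s_t, a_t) and a_t ~ pi(. | s_t) for t >= 2.\<close>

primrec sa_dist :: "('s \<Rightarrow> 'a \<Rightarrow> 's pmf) \<Rightarrow> ('s \<Rightarrow> 'a pmf) \<Rightarrow> 's \<Rightarrow> 'a \<Rightarrow> nat \<Rightarrow> ('s \<times> 'a) pmf" where
  "sa_dist p pol s a 0 = return_pmf (s, a)"
| "sa_dist p pol s a (Suc n) =
     bind_pmf (sa_dist p pol s a n)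
       (\<lambda>(st, act). bind_pmf (p st act) (\<lambda>s'. map_pmf (\<lambda>a'. (s', a')) (pol s')))"

definition Qpi :: "('s \<Rightarrow> 'a \<Rightarrow> 's pmf) \<Rightarrow> ('s \<Rightarrow> 'a \<Rightarrow> real) \<Rightarrow> real \<Rightarrow> ('s \<Rightarrow> 'a pmf)
                    \<Rightarrow> 's \<Rightarrow> 'a \<Rightarrow> real" where
  "Qpi p r \<gamma> pol s a =
     (\<Sum>n. \<gamma> ^ n * measure_pmf.expectation (sa_dist p pol s a n) (\<lambda>(st, act). r st act))"

end

theory Submission imports Defs begin

text \<open>Projecting the state-action chain onto the pair \<open>(\<phi>\<^sub>d s\<^sub>t, a\<^sub>t d)\<close> gives exactly the
state-action chain of the \<open>d\<close>-th factor MDP \<open>(p\<^sub>d, \<pi>\<^sub>d)\<close>: the transition and policy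
assumptions say that the abstracted next state and the next action are product distributions,
whose \<open>d\<close>-th marginals are \<open>p\<^sub>d\<close> and \<open>\<pi>\<^sub>d\<close>. Since the reward is additive and \<open>Q\<^sup>\<pi>\<close> is linear
in the reward, \<open>Q\<^sup>\<pi>(s, a)\<close> is the sum over \<open>d\<close> of the Q-functions of the factor MDPs at
\<open>(\<phi>\<^sub>d s, a\<^sub>d)\<close>.\<close>

lemma pmf_eq_if_agree_on_support:
  assumes "finite S" "set_pmf P \<subseteq> S" "\<And>x. x \<in> S \<Longrightarrow> pmf P x = pmf Q x"
  shows "P = Q"
proof -
  have "measure_pmf.prob Q S = (\<Sum>x\<in>S. pmf P x)"
    using assms(1,3) by (simp add: measure_measure_pmf_finite)
  also have "\<dots> = 1"
    using assms(1,2) by (rule sum_pmf_eq_1)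
  finally have "set_pmf Q \<subseteq> S"
    by (subst (asm) measure_pmf.prob_eq_1) (auto simp: AE_measure_pmf_iff)
  show ?thesis
  proof (rule pmf_eqI)
    fix x
    show "pmf P x = pmf Q x"
    proof (cases "x \<in> S")
      case False
      then have "x \<notin> set_pmf P" "x \<notin> set_pmf Q"
        using assms(2) \<open>set_pmf Q \<subseteq> S\<close> by blast+
      then show ?thesis by (simp add: set_pmf_iff)
    qed (use assms(3) in simp)
  qed
qed

lemma Pi_pmf_eqI:
  assumes "finite I" "finite S" "set_pmf P \<subseteq> S" "S \<subseteq> extensional I"
    and "\<And>x. x \<in> S \<Longrightarrow> pmf P x = (\<Prod>i\<in>I. pmf (Q i) (x i))"
  shows "P = Pi_pmf I undefined Q"
  using assms(2,3)
proof (rule pmf_eq_if_agree_on_support)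
  fix x assume "x \<in> S"
  then show "pmf P x = pmf (Pi_pmf I undefined Q) x"
    using assms(1,4,5) by (subst pmf_Pi') (auto simp: extensional_def)
qed

lemma map_pmf_restrict_eq_Pi_pmf:
  fixes P :: "'s::finite pmf" and \<phi> :: "'i \<Rightarrow> 's \<Rightarrow> 'z"
  assumes "finite I"
    and "\<And>s'. (\<Sum>s\<in>{s. \<forall>i\<in>I. \<phi> i s = \<phi> i s'}. pmf P s) = (\<Prod>i\<in>I. pmf (Q i) (\<phi> i s'))"
  shows "map_pmf (\<lambda>s. restrict (\<lambda>i. \<phi> i s) I) P = Pi_pmf I undefined Q"
proof (rule Pi_pmf_eqI[OF assms(1)])
  let ?\<Phi> = "\<lambda>s. restrict (\<lambda>i. \<phi> i s) I"
  show "finite (range ?\<Phi>)" by simp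
  show "set_pmf (map_pmf ?\<Phi> P) \<subseteq> range ?\<Phi>" and "range ?\<Phi> \<subseteq> extensional I"
    by auto
  fix x assume "x \<in> range ?\<Phi>"
  then obtain s' where x: "x = ?\<Phi> s'" by blast
  have "?\<Phi> -` {x} = {s. \<forall>i\<in>I. \<phi> i s = \<phi> i s'}"
    by (auto simp: x restrict_def fun_eq_iff) meson
  then have "pmf (map_pmf ?\<Phi> P) x = (\<Sum>s\<in>{s. \<forall>i\<in>I. \<phi> i s = \<phi> i s'}. pmf P s)"
    by (simp add: pmf_map measure_measure_pmf_finite)
  then show "pmf (map_pmf ?\<Phi> P) x = (\<Prod>i\<in>I. pmf (Q i) (x i))"
    using assms(2) by (simp add: x)
qed

lemma sa_dist_support:
  assumes "a \<in> F" "\<And>s. set_pmf (pol s) \<subseteq> F"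
  shows "set_pmf (sa_dist p pol s a n) \<subseteq> UNIV \<times> F"
proof (induction n)
  case (Suc n)
  then show ?case using assms(2) by (fastforce simp: set_bind_pmf)
qed (use assms in simp)

lemma map_sa_dist_lumped:
  assumes "a \<in> F" "\<And>s. set_pmf (pol s) \<subseteq> F"
    and trans: "\<And>s act. act \<in> F \<Longrightarrow> map_pmf f (p s act) = p' (f s) (g act)"
    and pol: "\<And>s. map_pmf g (pol s) = pol' (f s)"
  shows "map_pmf (map_prod f g) (sa_dist p pol s a n) = sa_dist p' pol' (f s) (g a) n"
proof (induction n)
  case 0
  then show ?case by simp
next
  case (Suc n)
  have step: "map_pmf (map_prod f g) (bind_pmf (p s act) (\<lambda>s'. map_pmf (Pair s') (pol s')))
      = bind_pmf (p' (f s) (g act)) (\<lambda>z. map_pmf (Pair z) (pol' z))" if "act \<in> F" for s act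
  proof -
    have "map_pmf (map_prod f g) (bind_pmf (p s act) (\<lambda>s'. map_pmf (Pair s') (pol s')))
        = bind_pmf (p s act) (\<lambda>s'. map_pmf (Pair (f s')) (map_pmf g (pol s')))"
      by (simp add: map_bind_pmf map_pmf_comp)
    also have "\<dots> = bind_pmf (map_pmf f (p s act)) (\<lambda>z. map_pmf (Pair z) (pol' z))"
      by (simp add: pol bind_map_pmf)
    finally show ?thesis
      using trans[OF that] by simp
  qed
  have "map_pmf (map_prod f g) (sa_dist p pol s a (Suc n))
      = bind_pmf (sa_dist p pol s a n) (\<lambda>(s, act).
          map_pmf (map_prod f g) (bind_pmf (p s act) (\<lambda>s'. map_pmf (Pair s') (pol s'))))"
    by (simp add: map_bind_pmf case_prod_unfold)
  also have "\<dots> = bind_pmf (sa_dist p pol s a n) (\<lambda>x. (\<lambda>(z, b).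
          bind_pmf (p' z b) (\<lambda>z'. map_pmf (Pair z') (pol' z'))) (map_prod f g x))"
  proof (rule bind_pmf_cong[OF refl])
    fix x assume "x \<in> set_pmf (sa_dist p pol s a n)"
    then have "snd x \<in> F" using sa_dist_support[OF assms(1,2)] by fastforce
    then show "(case x of (s, act) \<Rightarrow>
          map_pmf (map_prod f g) (bind_pmf (p s act) (\<lambda>s'. map_pmf (Pair s') (pol s'))))
        = (case map_prod f g x of (z, b) \<Rightarrow> bind_pmf (p' z b) (\<lambda>z'. map_pmf (Pair z') (pol' z')))"
      by (cases x) (simp add: step)
  qed
  also have "\<dots> = sa_dist p' pol' (f s) (g a) (Suc n)"
    by (simp add: bind_map_pmf Suc[symmetric])
  finally show ?case .
qed

lemma Qpi_lumped:
  assumes "a \<in> F" "\<And>s. set_pmf (pol s) \<subseteq> F"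
    and "\<And>s act. act \<in> F \<Longrightarrow> map_pmf f (p s act) = p' (f s) (g act)"
    and "\<And>s. map_pmf g (pol s) = pol' (f s)"
  shows "Qpi p (\<lambda>s act. r' (f s) (g act)) \<gamma> pol s a = Qpi p' r' \<gamma> pol' (f s) (g a)"
proof -
  have "sa_dist p' pol' (f s) (g a) n = map_pmf (map_prod f g) (sa_dist p pol s a n)" for n
    using map_sa_dist_lumped[of a F pol f p p' g pol'] assms by simp
  then show ?thesis
    by (simp add: Qpi_def case_prod_unfold)
qed

lemma summable_discounted_expectation:
  fixes f :: "'x \<Rightarrow> real"
  assumes "finite U" "\<And>n. set_pmf (M n) \<subseteq> U" "\<bar>\<gamma>\<bar> < 1"
  shows "summable (\<lambda>n. \<gamma> ^ n * measure_pmf.expectation (M n) f)"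
proof (rule summable_comparison_test)
  define B where "B = (\<Sum>x\<in>U. \<bar>f x\<bar>)"
  have "\<bar>measure_pmf.expectation (M n) f\<bar> \<le> B" for n
  proof -
    have "\<bar>measure_pmf.expectation (M n) f\<bar> = \<bar>\<Sum>x\<in>U. f x * pmf (M n) x\<bar>"
      using assms(1,2) by (subst integral_measure_pmf_real) auto
    also have "\<dots> \<le> (\<Sum>x\<in>U. \<bar>f x\<bar> * pmf (M n) x)"
      by (rule order_trans[OF sum_abs]) (simp add: abs_mult)
    also have "\<dots> \<le> B"
      unfolding B_def by (rule sum_mono) (simp add: mult_left_le pmf_le_1)
    finally show ?thesis .
  qed
  then show "\<exists>N. \<forall>n\<ge>N. norm (\<gamma> ^ n * measure_pmf.expectation (M n) f) \<le> \<bar>\<gamma>\<bar> ^ n * B"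
    by (auto simp: abs_mult power_abs intro!: mult_left_mono)
  show "summable (\<lambda>n. \<bar>\<gamma>\<bar> ^ n * B)"
    using assms(3) by (intro summable_mult2 summable_geometric) auto
qed

lemma Qpi_sum_rewards:
  fixes p :: "'s::finite \<Rightarrow> 'a \<Rightarrow> 's pmf"
  assumes "\<bar>\<gamma>\<bar> < 1" "finite F" "a \<in> F" "\<And>s. set_pmf (pol s) \<subseteq> F"
    and "\<And>s act. act \<in> F \<Longrightarrow> r s act = (\<Sum>i\<in>I. r' i s act)"
  shows "Qpi p r \<gamma> pol s a = (\<Sum>i\<in>I. Qpi p (r' i) \<gamma> pol s a)"
proof -
  let ?M = "sa_dist p pol s a"
  have support: "set_pmf (?M n) \<subseteq> UNIV \<times> F" for n
    using sa_dist_support[OF assms(3,4)] .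
  have "measure_pmf.expectation (?M n) (\<lambda>(s, act). r s act)
      = (\<Sum>i\<in>I. measure_pmf.expectation (?M n) (\<lambda>(s, act). r' i s act))" for n
  proof -
    have "AE x in ?M n. (case x of (s, act) \<Rightarrow> r s act) = (\<Sum>i\<in>I. case x of (s, act) \<Rightarrow> r' i s act)"
      unfolding AE_measure_pmf_iff using support assms(5) by fastforce
    then have "measure_pmf.expectation (?M n) (\<lambda>(s, act). r s act)
        = measure_pmf.expectation (?M n) (\<lambda>x. \<Sum>i\<in>I. case x of (s, act) \<Rightarrow> r' i s act)"
      by (rule integral_cong_AE[rotated 2]) simp_all
    also have "\<dots> = (\<Sum>i\<in>I. measure_pmf.expectation (?M n) (\<lambda>(s, act). r' i s act))"
    proof (rule Bochner_Integration.integral_sum)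
      show "integrable (?M n) (\<lambda>(s, act). r' i s act)" for i
        using assms(2) by (intro integrable_measure_pmf_finite finite_subset[OF support]) simp
    qed
    finally show ?thesis .
  qed
  moreover have "summable (\<lambda>n. \<gamma> ^ n * measure_pmf.expectation (?M n) (\<lambda>(s, act). r' i s act))"
    for i
    using assms(2) by (intro summable_discounted_expectation[OF _ support assms(1)]) simp
  ultimately show ?thesis
    unfolding Qpi_def by (simp add: sum_distrib_left suminf_sum)
qed

theorem theorem1:
  fixes p :: "'s::finite \<Rightarrow> (nat \<Rightarrow> 'b) \<Rightarrow> 's pmf"
    and r :: "'s \<Rightarrow> (nat \<Rightarrow> 'b) \<Rightarrow> real"
    and \<gamma> :: real
    and D :: nat
    and A :: "nat \<Rightarrow> 'b set"
    and pol :: "'s \<Rightarrow> (nat \<Rightarrow> 'b) pmf"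
    and \<phi> :: "nat \<Rightarrow> 's \<Rightarrow> 'z"
    and pd :: "nat \<Rightarrow> 'z \<Rightarrow> 'b \<Rightarrow> 'z pmf"
    and rd :: "nat \<Rightarrow> 'z \<Rightarrow> 'b \<Rightarrow> real"
    and pold :: "nat \<Rightarrow> 'z \<Rightarrow> 'b pmf"
  assumes gamma: "0 \<le> \<gamma>" "\<gamma> < 1"
    and A_fin: "\<And>d. d < D \<Longrightarrow> finite (A d)"
    and pol_supp: "\<And>s. set_pmf (pol s) \<subseteq> factored_actions D A"
    and pold_supp: "\<And>d z. d < D \<Longrightarrow> set_pmf (pold d z) \<subseteq> A d"
    and trans_fact: "\<And>s s' a. a \<in> factored_actions D A \<Longrightarrow>
        (\<Sum>st\<in>{st. \<forall>d<D. \<phi> d st = \<phi> d s'}. pmf (p s a) st)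
          = (\<Prod>d<D. pmf (pd d (\<phi> d s) (a d)) (\<phi> d s'))"
    and rew_fact: "\<And>s a. a \<in> factored_actions D A \<Longrightarrow>
        r s a = (\<Sum>d<D. rd d (\<phi> d s) (a d))"
    and pol_fact: "\<And>s a. a \<in> factored_actions D A \<Longrightarrow>
        pmf (pol s) a = (\<Prod>d<D. pmf (pold d (\<phi> d s)) (a d))"
  shows "\<exists>q :: nat \<Rightarrow> 's \<Rightarrow> 'b \<Rightarrow> real. \<forall>s. \<forall>a\<in>factored_actions D A.
           Qpi p r \<gamma> pol s a = (\<Sum>d<D. q d s (a d))"
proof (intro exI[of _ "\<lambda>d s b. Qpi (pd d) (rd d) \<gamma> (pold d) (\<phi> d s) b"] ballI allI)
  let ?F = "factored_actions D A"
  have finite_F: "finite ?F"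
    unfolding factored_actions_def using A_fin by (intro finite_PiE) auto
  have pol_marginal: "map_pmf (\<lambda>a. a d) (pol s) = pold d (\<phi> d s)" if "d < D" for d s
  proof -
    have "pol s = Pi_pmf {..<D} undefined (\<lambda>d. pold d (\<phi> d s))"
      using finite_F pol_supp pol_fact
      by (intro Pi_pmf_eqI) (auto simp: factored_actions_def PiE_iff)
    then show ?thesis using that by (simp add: Pi_pmf_component)
  qed
  have trans_marginal: "map_pmf (\<phi> d) (p s a) = pd d (\<phi> d s) (a d)" if "d < D" "a \<in> ?F" for d s a
  proof -
    have "map_pmf (\<lambda>s'. restrict (\<lambda>d. \<phi> d s') {..<D}) (p s a)
        = Pi_pmf {..<D} undefined (\<lambda>d. pd d (\<phi> d s) (a d))"
      using trans_fact[OF that(2)] by (intro map_pmf_restrict_eq_Pi_pmf) (simp_all add: Ball_def)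
    from arg_cong[OF this, of "map_pmf (\<lambda>x. x d)"] show ?thesis
      using that(1) by (simp add: map_pmf_comp Pi_pmf_component)
  qed
  fix s a assume a: "a \<in> ?F"
  have "Qpi p r \<gamma> pol s a = (\<Sum>d<D. Qpi p (\<lambda>s a. rd d (\<phi> d s) (a d)) \<gamma> pol s a)"
    using gamma finite_F a pol_supp rew_fact by (intro Qpi_sum_rewards) auto
  also have "\<dots> = (\<Sum>d<D. Qpi (pd d) (rd d) \<gamma> (pold d) (\<phi> d s) (a d))"
    using a pol_supp pol_marginal trans_marginal by (intro sum.cong Qpi_lumped) auto
  finally show "Qpi p r \<gamma> pol s a = (\<Sum>d<D. Qpi (pd d) (rd d) \<gamma> (pold d) (\<phi> d s) (a d))" .
qed

end
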